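(* Assume (A3), (A5), (A6) below. Let $R_{MV}=\Sigma_{MM}^\dagger\Sigma_{MV}:\mathcal H\to\mathcal M$ and $R_{VM}$ its adjoint. For $m\in\Omega_M$ let $\lambda(m)\in\mathcal H$ be the Riesz representer of the bounded functional $v\mapsto (R_{MV}v)(m)$. Define the weak conditional mean $$\Psi(m)=\mathbb E[V_I\,\|\,M=m]:=\mathbb EV_I+\lambda(m)-\mathbb E[\lambda(M)].$$ Then: (1) for all $v\in\mathcal H$, $\langle\Psi(m),v\rangle_{\mathcal H}=\langle\mathbb EV_I,v\rangle_{\mathcal H}+(R_{MV}v)(m)-\mathbb E[(R_{MV}v)(M)]$; (2) $\Psi(m)=\mathbb EV_I+R_{VM}(\tau_M(m)-\mu_M)=\mathbb EV_I+\Sigma_{VM}\Sigma_{MM}^\dagger(\tau_M(m)-\mu_M)$.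
   Context: Notation: $(a\otimes b)h=\langle b,h\rangle a$. Expectations are Bochner integrals. $\Sigma^\dagger$ is the Moore–Penrose inverse (inverse of $\Sigma$ restricted to $\overline{\mathrm{ran}\Sigma}$). Setting: $\mathcal H$ is a separable Hilbert space. $X$ and $M$ are random elements of separable metric spaces $\Omega_X$ and $\Omega_M$, and $V_I,V_D$ are $\mathcal H$-valued random elements. (A3) $\kappa_M$ and $\kappa_X$ are continuous positive definite kernels on $\Omega_M$ and $\Omega_X$ with separable RKHSs $\mathcal M$ and $\mathcal X$. Write $\tau_M(m)=\kappa_M(\cdot,m)$ and $\tau_X(x)=\kappa_X(\cdot,x)$. (A5) $\mathbb E\kappa_M(M,M)$, $\mathbb E[\kappa_M(M,M)^{1/2}\|V_I\|]$, $\mathbb E\kappa_X(X,X)$, $\mathbb E[\kappa_X(X,X)^{1/2}\|V_D\|]$ and $\mathbb E[\kappa_X(X,X)^{1/2}\|\tau_M(M)\|]$ are finite. With $\mu_M=\mathbb E\tau_M(M)$ and $\mu_X=\mathbb E\tau_X(X)$, define - $\Sigma_{MM}=\mathbb E[(\tau_M(M)-\mu_M)^{\otimes2}]$, and $\Sigma_{XX}$ analogously; - $\Sigma_{XM}=\mathbb E[(\tau_X(X)-\mu_X)\otimes(\tau_M(M)-\mu_M)]$, with $\Sigma_{MX}=\Sigma_{XM}^*$; - $\Sigma_{MV}=\mathbb E[(\tau_M(M)-\mu_M)\otimes(V_I-\mathbb EV_I)]$, with $\Sigma_{VM}=\Sigma_{MV}^*$; - $\Sigma_{XV}=\mathbb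 E[(\tau_X(X)-\mu_X)\otimes(V_D-\mathbb EV_D)]$. (A6) $\mathrm{ran}\Sigma_{XM},\mathrm{ran}\Sigma_{XV}\subset\mathrm{ran}\Sigma_{XX}$ and $\mathrm{ran}\Sigma_{MX},\mathrm{ran}\Sigma_{MV}\subset\mathrm{ran}\Sigma_{MM}$; $\Sigma_{XX}^\dagger\Sigma_{XM}$, $\Sigma_{XX}^\dagger\Sigma_{XV}$ and $\Sigma_{MM}^\dagger\Sigma_{MV}$ are bounded. *)

theory Defs
  imports "HOL-Analysis.Analysis" "HOL-Probability.Probability"
begin

text \<open>Cross-covariance operator E[(A - EA) (x) (B - EB)], applied pointwise:
  (a (x) b) h = <b,h> a, and the Bochner integral of the operator-valued
  integrand applied to h equals the Bochner integral of the applied integrand.\<close>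
definition cov ::
  "'w measure \<Rightarrow> ('w \<Rightarrow> 'b::{real_inner,banach,second_countable_topology})
   \<Rightarrow> ('w \<Rightarrow> 'c::{real_inner,banach,second_countable_topology}) \<Rightarrow> 'c \<Rightarrow> 'b" where
  "cov P A B = (\<lambda>h. integral\<^sup>L P (\<lambda>w. inner (B w - integral\<^sup>L P B) h *\<^sub>R (A w - integral\<^sup>L P A)))"

text \<open>Moore-Penrose inverse: the unique x in the closure of ran T with
  y - T x orthogonal to ran T (for y in ran T this is T restricted to the
  closure of ran T, inverted).  Its natural domain is ran T + (ran T)^perp.\<close>
definition pinv :: "('a::real_inner \<Rightarrow> 'a) \<Rightarrow> 'a \<Rightarrow> 'a" where
  "pinv T y = (THE x. x \<in> closure (range T) \<and> (\<forall>z. inner (y - T x) (T z) = 0))"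

definition pinv_dom :: "('a::real_inner \<Rightarrow> 'a) \<Rightarrow> 'a set" where
  "pinv_dom T = {y. \<exists>x \<in> closure (range T). \<forall>z. inner (y - T x) (T z) = 0}"

definition riesz_rep :: "('h::real_inner \<Rightarrow> real) \<Rightarrow> 'h" where
  "riesz_rep \<phi> = (THE l. \<forall>v. inner l v = \<phi> v)"

end

theory Submission
  imports Defs
begin

text \<open>With \<open>R = \<Sigma>\<^sub>M\<^sub>M\<^sup>\<dagger> \<Sigma>\<^sub>M\<^sub>V\<close> bounded, the Riesz representer of
  \<open>v \<mapsto> \<langle>R v, \<tau>(m)\<rangle>\<close> is \<open>R\<^sup>* \<tau>(m)\<close>, and \<open>R\<^sup>*\<close> commutes with the Bochner integral, so
  \<open>\<Psi>(m) = E V\<^sub>I + R\<^sup>* (\<tau>(m) - \<mu>\<^sub>M)\<close>; testing against \<open>v\<close> gives (1).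
  For (2), let \<open>y = \<tau>(m) - \<mu>\<^sub>M\<close> and \<open>x = \<Sigma>\<^sub>M\<^sub>M\<^sup>\<dagger> y\<close>.
  The residual \<open>y - \<Sigma>\<^sub>M\<^sub>M x\<close> is orthogonal to \<open>ran \<Sigma>\<^sub>M\<^sub>M\<close>, whose closure contains \<open>R v\<close>, so by self-adjointness
  \<open>\<langle>R v, y\<rangle> = \<langle>\<Sigma>\<^sub>M\<^sub>M R v, x\<rangle> = \<langle>\<Sigma>\<^sub>M\<^sub>V v, x\<rangle> = \<langle>v, \<Sigma>\<^sub>V\<^sub>M x\<rangle>\<close>.\<close>

lemma inner_zero_on_closure:
  fixes w :: "'a::real_inner"
  assumes "\<And>s. s \<in> S \<Longrightarrow> inner w s = 0" and "x \<in> closure S"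
  shows "inner w x = 0"
proof -
  have "closed {x. inner w x = 0}"
    by (intro closed_Collect_eq continuous_intros)
  then have "closure S \<subseteq> {x. inner w x = 0}"
    using assms(1) by (intro closure_minimal) auto
  then show ?thesis
    using assms(2) by blast
qed

lemma subspace_closure:
  fixes S :: "'a::real_normed_vector set"
  assumes "subspace S"
  shows "subspace (closure S)"
  unfolding subspace_def
proof (intro conjI ballI allI)
  show "0 \<in> closure S"
    using assms closure_subset subspace_0 by blast
next
  fix x y assume "x \<in> closure S" "y \<in> closure S"
  then have "x + y \<in> closure (S + S)"
    using closure_sum set_plus_intro by blast
  moreover have "S + S \<subseteq> S"
    using assms subspace_add by (auto simp: set_plus_def)
  ultimately show "x + y \<in> closure S"
    using closure_mono by blast
next
  fix c x assume "x \<in> closure S"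
  then have "c *\<^sub>R x \<in> closure ((*\<^sub>R) c ` S)"
    by (metis closure_scaleR imageI)
  moreover have "(*\<^sub>R) c ` S \<subseteq> S"
    using assms subspace_scale by blast
  ultimately show "c *\<^sub>R x \<in> closure S"
    using closure_mono by blast
qed

lemma convex_minimizing_sequence_Cauchy:
  fixes S :: "'a::real_inner set"
  assumes "convex S" and f_in: "\<And>n. f n \<in> S"
    and dist_f: "(\<lambda>n. dist a (f n)) \<longlonglongrightarrow> infdist a S"
  shows "Cauchy f"
proof (rule CauchyI)
  fix e :: real assume "0 < e"
  let ?d = "infdist a S"
  have parallelogram: "norm (f m - f n)^2 \<le> 2 * dist a (f m)^2 + 2 * dist a (f n)^2 - 4 * ?d^2"
    for m n
  proof -
    have "(1/2) *\<^sub>R f m + (1/2) *\<^sub>R f n \<in> S"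
      using assms(1) f_in by (intro convexD) auto
    then have "?d^2 \<le> dist a ((1/2) *\<^sub>R f m + (1/2) *\<^sub>R f n)^2"
      by (intro power_mono infdist_le infdist_nonneg)
    moreover have "norm (f m - f n)^2 + 4 * dist a ((1/2) *\<^sub>R f m + (1/2) *\<^sub>R f n)^2
        = 2 * dist a (f m)^2 + 2 * dist a (f n)^2"
      by (simp add: dist_norm power2_norm_eq_inner inner_diff_left inner_diff_right inner_commute
          algebra_simps)
    ultimately show ?thesis
      by linarith
  qed
  have "(\<lambda>n. dist a (f n)^2) \<longlonglongrightarrow> ?d^2"
    by (intro tendsto_intros dist_f)
  moreover have "?d^2 < ?d^2 + e^2 / 4"
    using \<open>0 < e\<close> by simp
  ultimately have "eventually (\<lambda>n. dist a (f n)^2 < ?d^2 + e^2 / 4) sequentially"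
    by (rule order_tendstoD(2))
  then obtain N where N: "\<And>n. n \<ge> N \<Longrightarrow> dist a (f n)^2 < ?d^2 + e^2 / 4"
    unfolding eventually_sequentially by blast
  have "norm (f m - f n) < e" if "m \<ge> N" "n \<ge> N" for m n
  proof -
    have "norm (f m - f n)^2 < e^2"
      using parallelogram[of m n] N[OF that(1)] N[OF that(2)] by linarith
    then show ?thesis
      using \<open>0 < e\<close> by (simp add: power_less_imp_less_base)
  qed
  then show "\<exists>N. \<forall>m\<ge>N. \<forall>n\<ge>N. norm (f m - f n) < e"
    by blast
qed

lemma closed_convex_nearest_point_exists:
  fixes S :: "'a::{real_inner,complete_space} set"
  assumes "closed S" and "convex S" and "S \<noteq> {}"
  obtains p where "p \<in> S" and "\<And>s. s \<in> S \<Longrightarrow> dist a p \<le> dist a s"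
proof -
  let ?d = "infdist a S"
  have "\<exists>s. s \<in> S \<and> dist a s < ?d + inverse (real (Suc n))" for n
  proof -
    have "bdd_below (dist a ` S)"
      by (rule bdd_belowI[of _ 0]) auto
    moreover have "(INF s\<in>S. dist a s) < ?d + inverse (real (Suc n))"
      using assms(3) by (simp add: infdist_notempty)
    ultimately show ?thesis
      by (simp add: cINF_less_iff[OF assms(3)] Bex_def)
  qed
  then obtain f where f: "\<forall>n. f n \<in> S \<and> dist a (f n) < ?d + inverse (real (Suc n))"
    using choice[of "\<lambda>n s. s \<in> S \<and> dist a s < ?d + inverse (real (Suc n))"] by blast
  then have f_in: "\<And>n. f n \<in> S" and f_close: "\<And>n. dist a (f n) < ?d + inverse (real (Suc n))"
    by blast+
  have "eventually (\<lambda>n. ?d \<le> dist a (f n)) sequentially"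
    by (intro always_eventually allI infdist_le f_in)
  moreover have "eventually (\<lambda>n. dist a (f n) \<le> ?d + inverse (real (Suc n))) sequentially"
    by (intro always_eventually allI less_imp_le f_close)
  ultimately have dist_f: "(\<lambda>n. dist a (f n)) \<longlonglongrightarrow> ?d"
    using tendsto_const LIMSEQ_inverse_real_of_nat_add by (rule tendsto_sandwich)
  then have "Cauchy f"
    by (rule convex_minimizing_sequence_Cauchy[OF assms(2) f_in])
  then obtain p where p: "f \<longlonglongrightarrow> p"
    using Cauchy_convergent_iff convergent_def by blast
  have "(\<lambda>n. dist a (f n)) \<longlonglongrightarrow> dist a p"
    by (intro tendsto_intros p)
  then have "dist a p = ?d"
    using dist_f LIMSEQ_unique by blast
  show ?thesis
  proof (rule that)
    show "p \<in> S"
      by (rule closed_sequentially[OF assms(1) f_in p])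
    show "dist a p \<le> dist a s" if "s \<in> S" for s
      using \<open>dist a p = ?d\<close> infdist_le[OF that] by simp
  qed
qed

lemma nearest_point_subspace_orthogonal:
  fixes S :: "'a::real_inner set"
  assumes "subspace S" and "p \<in> S" and nearest: "\<And>s. s \<in> S \<Longrightarrow> dist a p \<le> dist a s"
    and "s \<in> S"
  shows "inner (a - p) s = 0"
proof (cases "s = 0")
  case False
  define c where "c = inner (a - p) s"
  define t where "t = c / inner s s"
  have "p + t *\<^sub>R s \<in> S"
    using assms by (simp add: subspace_add subspace_scale)
  then have "dist a p ^ 2 \<le> dist a (p + t *\<^sub>R s) ^ 2"
    using nearest by (simp add: power_mono)
  also have "\<dots> = dist a p ^ 2 - 2 * t * c + t^2 * inner s s"
    unfolding c_def dist_norm power2_norm_eq_inner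
    by (simp add: inner_diff inner_add inner_commute power2_eq_square algebra_simps)
  also have "\<dots> = dist a p ^ 2 - c^2 / inner s s"
    using False by (simp add: t_def power2_eq_square field_simps)
  finally have "c^2 / inner s s \<le> 0"
    by simp
  moreover have "0 < inner s s"
    using False by simp
  ultimately have "c^2 \<le> 0"
    by (auto simp: divide_le_0_iff)
  then show ?thesis
    by (simp add: c_def)
qed simp

lemma orthogonal_projection_exists:
  fixes S :: "'a::{real_inner,complete_space} set"
  assumes "closed S" and "subspace S"
  obtains p where "p \<in> S" and "\<And>s. s \<in> S \<Longrightarrow> inner (a - p) s = 0"
proof -
  have "S \<noteq> {}"
    using assms(2) subspace_0 by blast
  then obtain p where "p \<in> S" "\<And>s. s \<in> S \<Longrightarrow> dist a p \<le> dist a s"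
    using closed_convex_nearest_point_exists assms subspace_imp_convex by metis
  then show ?thesis
    using that nearest_point_subspace_orthogonal[OF assms(2)] by blast
qed

lemma riesz_representation:
  fixes f :: "'a::{real_inner,complete_space} \<Rightarrow> real"
  assumes "bounded_linear f"
  obtains l where "\<And>v. inner l v = f v"
proof (cases "\<forall>v. f v = 0")
  case False
  interpret f: bounded_linear f by fact
  obtain a where "f a \<noteq> 0"
    using False by blast
  let ?K = "{v. f v = 0}"
  have "closed ?K"
    by (intro closed_Collect_eq continuous_on_const f.continuous_on continuous_on_id)
  moreover have "subspace ?K"
    by (auto simp: subspace_def f.add f.scale f.zero)
  ultimately obtain p where p: "p \<in> ?K" "\<And>s. s \<in> ?K \<Longrightarrow> inner (a - p) s = 0"
    using orthogonal_projection_exists[where a = a] by blast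
  define z where "z = a - p"
  have z_perp: "\<And>s. f s = 0 \<Longrightarrow> inner z s = 0"
    using p(2) by (simp add: z_def)
  have fz: "f z \<noteq> 0"
    using p(1) \<open>f a \<noteq> 0\<close> by (simp add: z_def f.diff)
  then have "inner z z \<noteq> 0"
    by auto
  have "inner ((f z / inner z z) *\<^sub>R z) v = f v" for v
  proof -
    have "inner z (v - (f v / f z) *\<^sub>R z) = 0"
      using fz by (intro z_perp) (simp add: f.diff f.scale)
    then have "inner z v = (f v / f z) * inner z z"
      by (simp add: inner_diff_right)
    then show ?thesis
      using fz \<open>inner z z \<noteq> 0\<close> by (simp add: field_simps)
  qed
  then show ?thesis
    by (rule that)
qed (use that[of 0] in simp)

lemma riesz_rep_eqI:
  assumes "\<And>v. inner l v = \<phi> v"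
  shows "riesz_rep \<phi> = l"
  unfolding riesz_rep_def
proof (rule the_equality)
  show "l' = l" if "\<forall>v. inner l' v = \<phi> v" for l'
    by (rule vector_eq_rdot[THEN iffD1]) (simp add: that assms)
qed (simp add: assms)

lemma bounded_linear_adjoint_works:
  fixes f :: "'a::{real_inner,complete_space} \<Rightarrow> 'b::real_inner"
  assumes "bounded_linear f"
  shows "inner (f x) y = inner x (adjoint f y)"
proof -
  have "\<exists>l. \<forall>x. inner l x = inner (f x) y" for y
    using riesz_representation[OF bounded_linear_compose[OF bounded_linear_inner_left assms]]
    by metis
  then obtain g where "\<And>x y. inner (f x) y = inner x (g y)"
    by (metis inner_commute)
  then have "adjoint f = g"
    by (intro adjoint_unique) blast
  then show ?thesis
    using \<open>\<And>x y. inner (f x) y = inner x (g y)\<close> by simp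
qed

lemma bounded_linear_adjoint:
  fixes f :: "'a::{real_inner,complete_space} \<Rightarrow> 'b::real_inner"
  assumes "bounded_linear f"
  shows "bounded_linear (adjoint f)"
proof -
  note adj = bounded_linear_adjoint_works[OF assms]
  obtain K where K: "\<And>x. norm (f x) \<le> norm x * K" "K > 0"
    using assms bounded_linear.pos_bounded by blast
  show ?thesis
  proof (rule bounded_linear_intro[where K=K])
    show "adjoint f (x + y) = adjoint f x + adjoint f y" for x y
      by (metis adj inner_add_right vector_eq_ldot)
    show "adjoint f (r *\<^sub>R x) = r *\<^sub>R adjoint f x" for r x
      by (metis adj inner_scaleR_right vector_eq_ldot)
    show "norm (adjoint f y) \<le> norm y * K" for y
    proof -
      have "norm (adjoint f y)^2 = inner (f (adjoint f y)) y"
        by (simp add: adj power2_norm_eq_inner)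
      also have "\<dots> \<le> norm (f (adjoint f y)) * norm y"
        by (rule norm_cauchy_schwarz)
      also have "\<dots> \<le> norm (adjoint f y) * K * norm y"
        using K by (simp add: mult_right_mono)
      finally have "norm (adjoint f y) * norm (adjoint f y) \<le> norm (adjoint f y) * (K * norm y)"
        by (simp add: power2_eq_square mult.assoc)
      then show ?thesis
        by (cases "adjoint f y = 0") (use K(2) in \<open>auto simp: mult.commute\<close>)
    qed
  qed
qed

lemma riesz_rep_inner_eq_adjoint:
  fixes R :: "'a::{real_inner,complete_space} \<Rightarrow> 'b::real_inner"
  assumes "bounded_linear R"
  shows "riesz_rep (\<lambda>v. inner (R v) t) = adjoint R t"
  by (rule riesz_rep_eqI)
    (simp add: inner_commute[of "adjoint R t"] bounded_linear_adjoint_works[OF assms])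

lemma linear_if_symmetric:
  fixes T :: "'a::real_inner \<Rightarrow> 'a"
  assumes "\<And>x y. inner (T x) y = inner x (T y)"
  shows "linear T"
proof (rule linearI)
  show "T (x + y) = T x + T y" for x y
    by (rule vector_eq_rdot[THEN iffD1]) (simp add: assms inner_add_left inner_add_right)
  show "T (c *\<^sub>R x) = c *\<^sub>R T x" for c x
    by (rule vector_eq_rdot[THEN iffD1]) (simp add: assms)
qed

lemma pinv_eqI:
  fixes T :: "'a::real_inner \<Rightarrow> 'a"
  assumes T_sym: "\<And>x y. inner (T x) y = inner x (T y)"
    and x: "x \<in> closure (range T)" and residual: "\<And>z. inner (y - T x) (T z) = 0"
  shows "pinv T y = x"
  unfolding pinv_def
proof (rule the_equality)
  show "x \<in> closure (range T) \<and> (\<forall>z. inner (y - T x) (T z) = 0)"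
    using x residual by blast
next
  fix x' assume x': "x' \<in> closure (range T) \<and> (\<forall>z. inner (y - T x') (T z) = 0)"
  interpret T: linear T
    using linear_if_symmetric T_sym by blast
  define d where "d = x' - x"
  have "inner (T d) (T z) = 0" for z
    using residual[of z] x' by (auto simp: d_def T.diff inner_diff_left)
  then have "T d = 0"
    by (metis inner_eq_zero_iff)
  then have "inner d (T z) = 0" for z
    by (simp flip: T_sym)
  then have "inner d x' = 0" and "inner d x = 0"
    using inner_zero_on_closure x x' by blast+
  then have "inner d d = 0"
    by (simp add: d_def inner_diff_right)
  then show "x' = x"
    by (simp add: d_def)
qed

lemma
  fixes T :: "'a::{real_inner,complete_space} \<Rightarrow> 'a"
  assumes T_sym: "\<And>x y. inner (T x) y = inner x (T y)"
  shows pinv_apply_image: "T (pinv T (T a)) = T a"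
    and pinv_image_in_closure_range: "pinv T (T a) \<in> closure (range T)"
proof -
  have "linear T"
    using linear_if_symmetric T_sym by blast
  then have sub: "subspace (closure (range T))"
    by (intro subspace_closure linear_subspace_image subspace_UNIV)
  obtain p where p: "p \<in> closure (range T)"
    and perp: "\<And>s. s \<in> closure (range T) \<Longrightarrow> inner (a - p) s = 0"
    using orthogonal_projection_exists[where a = a, OF closed_closure sub] by blast
  have "inner (T (a - p)) z = 0" for z
  proof -
    have "T z \<in> closure (range T)"
      by (rule closure_subset[THEN subsetD, OF rangeI])
    then show ?thesis
      unfolding T_sym by (rule perp)
  qed
  then have "T (a - p) = 0"
    using inner_eq_zero_iff by blast
  then have "T p = T a"
    using linear_diff[OF \<open>linear T\<close>] by simp
  moreover have "pinv T (T a) = p"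
    using p by (rule pinv_eqI[OF T_sym]) (simp add: \<open>T p = T a\<close>)
  ultimately show "T (pinv T (T a)) = T a" and "pinv T (T a) \<in> closure (range T)"
    using p by simp_all
qed

lemma adjoint_pinv_comp:
  fixes S :: "'a::{real_inner,complete_space} \<Rightarrow> 'a"
    and C :: "'b::{real_inner,complete_space} \<Rightarrow> 'a"
  assumes S_sym: "\<And>x y. inner (S x) y = inner x (S y)"
    and C_adj: "\<And>v x. inner (C v) x = inner v (C' x)"
    and range_C: "range C \<subseteq> range S"
    and R_bl: "bounded_linear (\<lambda>v. pinv S (C v))"
    and y: "y \<in> pinv_dom S"
  shows "adjoint (\<lambda>v. pinv S (C v)) y = adjoint C (pinv S y)"
proof -
  let ?R = "\<lambda>v. pinv S (C v)"
  obtain x where x: "x \<in> closure (range S)" and residual: "\<And>z. inner (y - S x) (S z) = 0"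
    using y unfolding pinv_dom_def by blast
  have "pinv S y = x"
    using pinv_eqI[OF S_sym x residual] .
  moreover have "adjoint C = C'"
    using C_adj by (intro adjoint_unique) blast
  moreover have "inner v (adjoint ?R y) = inner v (C' x)" for v
  proof -
    obtain a where a: "C v = S a"
      using range_C by blast
    have "inner (y - S x) (?R v) = 0"
      using inner_zero_on_closure[of "range S", OF _ pinv_image_in_closure_range[OF S_sym]]
        residual a by auto
    then have "inner v (adjoint ?R y) = inner (?R v) (S x)"
      by (simp add: bounded_linear_adjoint_works[OF R_bl, symmetric] inner_diff inner_commute)
    also have "\<dots> = inner (C v) x"
      by (simp add: S_sym[symmetric] a pinv_apply_image[OF S_sym])
    finally show ?thesis
      by (simp add: C_adj)
  qed
  ultimately show ?thesis
    using vector_eq_ldot by metis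
qed

lemma integrable_inner_scaleR:
  fixes a :: "'w \<Rightarrow> 'a::{real_inner,banach,second_countable_topology}"
    and b :: "'w \<Rightarrow> 'b::{banach,second_countable_topology}"
  assumes [measurable]: "a \<in> borel_measurable P" "b \<in> borel_measurable P"
    and "integrable P (\<lambda>w. norm (a w) * norm (b w))"
  shows "integrable P (\<lambda>w. inner (a w) x *\<^sub>R b w)"
proof (rule Bochner_Integration.integrable_bound)
  show "integrable P (\<lambda>w. norm (a w) * norm (b w) * norm x)"
    using assms(3) by simp
  have "\<bar>inner (a w) x\<bar> * norm (b w) \<le> norm (a w) * norm x * norm (b w)" for w
    by (intro mult_right_mono Cauchy_Schwarz_ineq2) auto
  then show "AE w in P. norm (inner (a w) x *\<^sub>R b w) \<le> norm (norm (a w) * norm (b w) * norm x)"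
    by (intro AE_I2) (simp add: mult_ac)
qed measurable

lemma (in finite_measure) integrable_norm_diff_mult:
  fixes A :: "'a \<Rightarrow> 'b::{banach,second_countable_topology}"
    and B :: "'a \<Rightarrow> 'c::{banach,second_countable_topology}"
  assumes [measurable]: "A \<in> borel_measurable M" "B \<in> borel_measurable M"
    and "integrable M A" "integrable M B" "integrable M (\<lambda>w. norm (A w) * norm (B w))"
  shows "integrable M (\<lambda>w. norm (A w - a) * norm (B w - b))"
proof (rule Bochner_Integration.integrable_bound)
  show "integrable M (\<lambda>w. (norm (A w) + norm a) * (norm (B w) + norm b))"
    using assms(3-5) by (simp add: algebra_simps)
  have "norm (A w - a) * norm (B w - b) \<le> (norm (A w) + norm a) * (norm (B w) + norm b)" for w
    by (intro mult_mono norm_triangle_ineq4) auto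
  then show "AE w in M. norm (norm (A w - a) * norm (B w - b))
      \<le> norm ((norm (A w) + norm a) * (norm (B w) + norm b))"
    by (intro AE_I2) simp
qed measurable

lemma (in finite_measure) inner_cov:
  fixes A :: "'a \<Rightarrow> 'b::{real_inner,banach,second_countable_topology}"
    and B :: "'a \<Rightarrow> 'c::{real_inner,banach,second_countable_topology}"
  assumes [measurable]: "A \<in> borel_measurable M" "B \<in> borel_measurable M"
    and "integrable M A" "integrable M B" "integrable M (\<lambda>w. norm (A w) * norm (B w))"
  shows "inner (cov M A B x) y = inner x (cov M B A y)"
proof -
  let ?A = "\<lambda>w. A w - integral\<^sup>L M A" and ?B = "\<lambda>w. B w - integral\<^sup>L M B"
  have int: "integrable M (\<lambda>w. norm (?A w) * norm (?B w))"
    using assms by (rule integrable_norm_diff_mult)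
  have "integrable M (\<lambda>w. inner (?B w) x *\<^sub>R ?A w)"
    using int by (intro integrable_inner_scaleR) (simp_all add: mult.commute)
  moreover have "integrable M (\<lambda>w. inner (?A w) y *\<^sub>R ?B w)"
    using int by (intro integrable_inner_scaleR) simp_all
  ultimately have "inner (cov M A B x) y = (\<integral>w. inner (?B w) x * inner (?A w) y \<partial>M)"
    and "inner x (cov M B A y) = (\<integral>w. inner (?A w) y * inner x (?B w) \<partial>M)"
    by (simp_all add: cov_def flip: integral_inner_left integral_inner_right)
  then show ?thesis
    by (simp add: inner_commute mult.commute)
qed

lemma (in finite_measure) square_integrable_norm_imp_integrable:
  fixes f :: "'a \<Rightarrow> 'b::{banach,second_countable_topology}"
  assumes [measurable]: "f \<in> borel_measurable M"
    and "integrable M (\<lambda>w. norm (f w)^2)"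
  shows "integrable M f"
proof (rule integrable_norm_cancel)
  show "integrable M (\<lambda>w. norm (f w))"
    using assms(2) by (rule square_integrable_imp_integrable[rotated]) measurable
qed measurable

lemma continuous_on_feature_map:
  fixes tau :: "'a::topological_space \<Rightarrow> 'b::real_inner"
  assumes k_cont: "continuous_on UNIV (\<lambda>(a, b). k a b)"
    and k_feat: "\<And>a b. k a b = inner (tau a) (tau b)"
  shows "continuous_on UNIV tau"
  unfolding continuous_on_def
proof (intro ballI)
  fix a
  have dist_eq: "dist (tau x) (tau a) = sqrt (k x x - 2 * k x a + k a a)" for x
    by (simp add: k_feat dist_norm norm_eq_sqrt_inner inner_diff inner_commute)
  have "continuous_on UNIV (\<lambda>x. k x x)" "continuous_on UNIV (\<lambda>x. k x a)"
    using continuous_on_compose2[OF k_cont continuous_on_Pair, OF continuous_on_id]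
    by (auto intro: continuous_on_id continuous_on_const)
  then have "continuous_on UNIV (\<lambda>x. dist (tau x) (tau a))"
    unfolding dist_eq by (intro continuous_intros)
  then have "((\<lambda>x. dist (tau x) (tau a)) \<longlongrightarrow> dist (tau a) (tau a)) (at a within UNIV)"
    unfolding continuous_on_def by (rule bspec) simp
  then show "(tau \<longlongrightarrow> tau a) (at a within UNIV)"
    unfolding tendsto_dist_iff[of tau] by simp
qed

theorem proposition1:
  fixes P :: "'w measure"
    and X :: "'w \<Rightarrow> 'ox::{metric_space,second_countable_topology}"
    and M :: "'w \<Rightarrow> 'om::{metric_space,second_countable_topology}"
    and VI VD :: "'w \<Rightarrow> 'h::{real_inner,banach,second_countable_topology}"
    and kM :: "'om \<Rightarrow> 'om \<Rightarrow> real" and kX :: "'ox \<Rightarrow> 'ox \<Rightarrow> real"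
    and tauM :: "'om \<Rightarrow> 'm::{real_inner,banach,second_countable_topology}"
    and tauX :: "'ox \<Rightarrow> 'x::{real_inner,banach,second_countable_topology}"
  assumes P: "prob_space P"
    and X_meas: "X \<in> P \<rightarrow>\<^sub>M borel" and M_meas: "M \<in> P \<rightarrow>\<^sub>M borel"
    and VI_meas: "VI \<in> borel_measurable P" and VD_meas: "VD \<in> borel_measurable P"
    and VI_int: "integrable P VI" and VD_int: "integrable P VD"
    \<comment> \<open>(A3): continuous kernels, RKHS = closed span of the kernel sections,
        evaluation of f at m is inner f (tau m)\<close>
    and kM_cont: "continuous_on UNIV (\<lambda>(a,b). kM a b)"
    and kX_cont: "continuous_on UNIV (\<lambda>(a,b). kX a b)"
    and kM_feat: "\<And>a b. kM a b = inner (tauM a) (tauM b)"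
    and kX_feat: "\<And>a b. kX a b = inner (tauX a) (tauX b)"
    and M_rkhs: "closure (span (range tauM)) = UNIV"
    and X_rkhs: "closure (span (range tauX)) = UNIV"
    \<comment> \<open>(A5)\<close>
    and A5_1: "integrable P (\<lambda>w. kM (M w) (M w))"
    and A5_2: "integrable P (\<lambda>w. sqrt (kM (M w) (M w)) * norm (VI w))"
    and A5_3: "integrable P (\<lambda>w. kX (X w) (X w))"
    and A5_4: "integrable P (\<lambda>w. sqrt (kX (X w) (X w)) * norm (VD w))"
    and A5_5: "integrable P (\<lambda>w. sqrt (kX (X w) (X w)) * norm (tauM (M w)))"
  defines "muM \<equiv> integral\<^sup>L P (\<lambda>w. tauM (M w))"
    and "SMM \<equiv> cov P (\<lambda>w. tauM (M w)) (\<lambda>w. tauM (M w))"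
    and "SXX \<equiv> cov P (\<lambda>w. tauX (X w)) (\<lambda>w. tauX (X w))"
    and "SXM \<equiv> cov P (\<lambda>w. tauX (X w)) (\<lambda>w. tauM (M w))"
    and "SMV \<equiv> cov P (\<lambda>w. tauM (M w)) VI"
    and "SXV \<equiv> cov P (\<lambda>w. tauX (X w)) VD"
  assumes A6_1: "range SXM \<subseteq> range SXX" and A6_2: "range SXV \<subseteq> range SXX"
    and A6_3: "range (adjoint SXM) \<subseteq> range SMM" and A6_4: "range SMV \<subseteq> range SMM"
    and A6_5: "bounded_linear (\<lambda>a. pinv SXX (SXM a))"
    and A6_6: "bounded_linear (\<lambda>v. pinv SXX (SXV v))"
    and A6_7: "bounded_linear (\<lambda>v. pinv SMM (SMV v))"
  defines "RMV \<equiv> (\<lambda>v. pinv SMM (SMV v))"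
  defines "lam \<equiv> (\<lambda>m. riesz_rep (\<lambda>v. inner (RMV v) (tauM m)))"
  defines "Psi \<equiv> (\<lambda>m. integral\<^sup>L P VI + lam m - integral\<^sup>L P (\<lambda>w. lam (M w)))"
  shows "(\<forall>m v. inner (Psi m) v
              = inner (integral\<^sup>L P VI) v + inner (RMV v) (tauM m)
                - integral\<^sup>L P (\<lambda>w. inner (RMV v) (tauM (M w))))
    \<and> (\<forall>m. Psi m = integral\<^sup>L P VI + adjoint RMV (tauM m - muM))
    \<and> (\<forall>m. tauM m - muM \<in> pinv_dom SMM \<longrightarrow>
              Psi m = integral\<^sup>L P VI + adjoint SMV (pinv SMM (tauM m - muM)))"
proof -
  \<comment> \<open>Only the \<open>M\<close>-side of (A3), (A5), (A6) is needed; the \<open>X\<close>- and \<open>V\<^sub>D\<close>-hypotheses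
    belong to the common setting of the paper.\<close>
  interpret prob_space P
    by (rule P)
  note VI_meas[measurable]
  have [measurable]: "(\<lambda>w. tauM (M w)) \<in> borel_measurable P"
    using measurable_compose[OF M_meas borel_measurable_continuous_onI]
      continuous_on_feature_map[OF kM_cont kM_feat] by blast
  have norm_tauM: "norm (tauM m) = sqrt (kM m m)" for m
    by (simp add: kM_feat norm_eq_sqrt_inner)
  have "integrable P (\<lambda>w. norm (tauM (M w))^2)"
    using A5_1 by (simp add: kM_feat power2_norm_eq_inner)
  then have int_tauM: "integrable P (\<lambda>w. tauM (M w))"
    by (rule square_integrable_norm_imp_integrable[rotated]) measurable
  have "integrable P (\<lambda>w. norm (tauM (M w)) * norm (tauM (M w)))"
    using A5_1 by (simp add: norm_tauM)
  then have SMM_sym: "inner (SMM x) y = inner x (SMM y)" for x y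
    unfolding SMM_def by (rule inner_cov[OF _ _ int_tauM int_tauM, rotated 2]) measurable
  have "integrable P (\<lambda>w. norm (tauM (M w)) * norm (VI w))"
    using A5_2 by (simp add: norm_tauM)
  then have SMV_adj: "inner (SMV v) x = inner v (cov P VI (\<lambda>w. tauM (M w)) x)" for v x
    unfolding SMV_def by (rule inner_cov[OF _ _ int_tauM VI_int, rotated 2]) measurable
  have RMV_bl: "bounded_linear RMV"
    unfolding RMV_def by (rule A6_7)
  then have adj_bl: "bounded_linear (adjoint RMV)"
    by (rule bounded_linear_adjoint)
  have Psi_eq: "Psi m = integral\<^sup>L P VI + adjoint RMV (tauM m - muM)" for m
    using integral_bounded_linear[OF adj_bl int_tauM]
    unfolding Psi_def lam_def riesz_rep_inner_eq_adjoint[OF RMV_bl] muM_def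
    by (simp add: linear_diff[OF bounded_linear.linear[OF adj_bl]])
  show ?thesis
  proof (intro conjI allI impI)
    show "inner (Psi m) v = inner (integral\<^sup>L P VI) v + inner (RMV v) (tauM m)
        - integral\<^sup>L P (\<lambda>w. inner (RMV v) (tauM (M w)))" for m v
    proof -
      have "integral\<^sup>L P (\<lambda>w. inner (RMV v) (tauM (M w))) = inner (RMV v) muM"
        using int_tauM by (simp add: muM_def)
      moreover have "inner (adjoint RMV (tauM m - muM)) v = inner (RMV v) (tauM m - muM)"
        by (simp add: bounded_linear_adjoint_works[OF RMV_bl] inner_commute)
      ultimately show ?thesis
        by (simp add: Psi_eq inner_add_left inner_diff_right)
    qed
    show "Psi m = integral\<^sup>L P VI + adjoint RMV (tauM m - muM)" for m
      by (rule Psi_eq)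
    show "Psi m = integral\<^sup>L P VI + adjoint SMV (pinv SMM (tauM m - muM))"
      if "tauM m - muM \<in> pinv_dom SMM" for m
      unfolding Psi_eq RMV_def
      using adjoint_pinv_comp[OF SMM_sym SMV_adj A6_4 A6_7 that] by simp
  qed
qed

end
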